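(* Let $n$ be an even positive integer, let $0<\epsilon\le \frac1{18}$, and let $f_\epsilon:\mathbb{R}^n\to\mathbb{R}$ be \[ f_\epsilon(\mathbf{x})=\frac{1-\epsilon}{2}\sum_{i=1}^n x_i^2+\frac{\epsilon}{2}\Big(\sum_{i=1}^n x_i\Big)^2 , \] whose minimum point is $\mathbf{x}^*=\mathbf{0}$. Let $\Gamma\ge 1$. Let $\mathbf{x}^0$ be the point whose even-indexed coordinates equal $+1$ and whose odd-indexed coordinates equal $-1$. Run sequential stochastic coordinate descent for $t$ steps: at each step $s=1,\dots,t$ a coordinate $j\in\{1,\dots,n\}$ is chosen uniformly at random, independently of all previous choices, and one sets $x^s_j=x^{s-1}_j-\frac{1}{\Gamma}\nabla_j f_\epsilon(\mathbf{x}^{s-1})$ and $x^s_k=x^{s-1}_k$ for $k\ne j$. Then \[ \mathbb{E}\big[f_\epsilon(\mathbf{x}^t)-f_\epsilon(\mathbf{x}^* )\big]\ \ge\ \Big(1-\frac{2}{n}\cdot\frac{1-\epsilon}{\Gamma}\Big)^{t}\big(f_\epsilon(\mathbf{x}^0)-f_\epsilon(\mathbf{x}^* )\big). \]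
   Context: Here $\nabla_j f_\epsilon(\mathbf{x})=(1-\epsilon)x_j+\epsilon\sum_{i=1}^n x_i$. The parameter $\Gamma$ is the step-size parameter, required to satisfy $\Gamma\ge L_{\max}$, where $L_{\max}=1$ is the largest coordinate-wise Lipschitz constant of $\nabla_j f_\epsilon$ in $x_j$. *)

theory Defs
  imports "HOL-Probability.Probability"
begin

text \<open>Points of R^n are represented as functions nat => real, using coordinates 1..n.\<close>

definition f_eps :: "real \<Rightarrow> nat \<Rightarrow> (nat \<Rightarrow> real) \<Rightarrow> real" where
  "f_eps \<epsilon> n x = (1 - \<epsilon>) / 2 * (\<Sum>i=1..n. (x i)^2) + \<epsilon> / 2 * (\<Sum>i=1..n. x i)^2"

definition grad_eps :: "real \<Rightarrow> nat \<Rightarrow> (nat \<Rightarrow> real) \<Rightarrow> nat \<Rightarrow> real" where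
  "grad_eps \<epsilon> n x j = (1 - \<epsilon>) * x j + \<epsilon> * (\<Sum>i=1..n. x i)"

definition cd_step :: "real \<Rightarrow> nat \<Rightarrow> real \<Rightarrow> (nat \<Rightarrow> real) \<Rightarrow> nat \<Rightarrow> (nat \<Rightarrow> real)" where
  "cd_step \<epsilon> n \<Gamma> x j = x(j := x j - grad_eps \<epsilon> n x j / \<Gamma>)"

definition cd_run :: "real \<Rightarrow> nat \<Rightarrow> real \<Rightarrow> (nat \<Rightarrow> real) \<Rightarrow> nat list \<Rightarrow> (nat \<Rightarrow> real)" where
  "cd_run \<epsilon> n \<Gamma> x js = foldl (cd_step \<epsilon> n \<Gamma>) x js"

definition x_start :: "nat \<Rightarrow> real" where
  "x_start i = (if even i then 1 else -1)"

text \<open>Uniform independent choice of t coordinates in {1..n}: uniform distribution on sequences.\<close>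
definition choice_seqs :: "nat \<Rightarrow> nat \<Rightarrow> nat list set" where
  "choice_seqs n t = {js. length js = t \<and> set js \<subseteq> {1..n}}"

end

theory Submission
  imports Defs
begin

(* Averaging one step over the n equally likely coordinates shows that the mean iterate evolves
   linearly, by x |-> x - A x / (n \<Gamma>) with A = (1 - \<epsilon>) I + \<epsilon> 1 1^T.  The starting point has
   coordinate sum 0, so it is an eigenvector of A for the eigenvalue 1 - \<epsilon>, and the mean of the
   t-th iterate is (1 - a)^t x^0 with a = (1 - \<epsilon>) / (n \<Gamma>).  Since f_eps dominates
   (1 - \<epsilon>)/2 |x|^2 and the mean square dominates the square of the mean, the expected objective
   is at least (1 - a)^(2t) f_eps x^0 >= (1 - 2a)^t f_eps x^0. *)

lemma choice_seqs_Suc: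
  "choice_seqs n (Suc t) = (\<lambda>(js, j). js @ [j]) ` (choice_seqs n t \<times> {1..n})"
proof
  show "choice_seqs n (Suc t) \<subseteq> (\<lambda>(js, j). js @ [j]) ` (choice_seqs n t \<times> {1..n})"
  proof
    fix js assume js: "js \<in> choice_seqs n (Suc t)"
    then have "js \<noteq> []" by (auto simp: choice_seqs_def)
    then have js_eq: "js = butlast js @ [last js]" and "last js \<in> set js" by simp_all
    then have "(butlast js, last js) \<in> choice_seqs n t \<times> {1..n}"
      using js by (auto simp: choice_seqs_def dest: in_set_butlastD)
    then show "js \<in> (\<lambda>(js, j). js @ [j]) ` (choice_seqs n t \<times> {1..n})"
      using js_eq by (metis (no_types, lifting) case_prod_conv image_eqI)
  qed
qed (auto simp: choice_seqs_def)

lemma finite_choice_seqs: "finite (choice_seqs n t)"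
  using finite_lists_length_eq[of "{1..n}" t] by (simp add: choice_seqs_def conj_commute)

lemma card_choice_seqs: "card (choice_seqs n t) = n ^ t"
  using card_lists_length_eq[of "{1..n}" t] by (simp add: choice_seqs_def conj_commute)

lemma sum_choice_seqs_Suc:
  "(\<Sum>js\<in>choice_seqs n (Suc t). h js) = (\<Sum>js\<in>choice_seqs n t. \<Sum>j=1..n. h (js @ [j]))"
proof -
  have "inj_on (\<lambda>(js, j). js @ [j]) (choice_seqs n t \<times> {1..n})"
    by (auto simp: inj_on_def)
  then have "(\<Sum>js\<in>choice_seqs n (Suc t). h js)
      = (\<Sum>p\<in>choice_seqs n t \<times> {1..n}. h ((\<lambda>(js, j). js @ [j]) p))"
    unfolding choice_seqs_Suc by (subst sum.reindex) (simp_all add: comp_def)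
  then show ?thesis
    by (simp only: sum.cartesian_product) (simp add: case_prod_beta)
qed

lemma sum_cd_step_coordinate:
  assumes "i \<in> {1..n}"
  shows "(\<Sum>j=1..n. cd_step \<epsilon> n \<Gamma> x j i) = real n * x i - grad_eps \<epsilon> n x i / \<Gamma>"
proof -
  have "(\<Sum>j=1..n. cd_step \<epsilon> n \<Gamma> x j i)
      = (\<Sum>j=1..n. x i - (if j = i then grad_eps \<epsilon> n x i / \<Gamma> else 0))"
    by (rule sum.cong) (auto simp: cd_step_def)
  then show ?thesis
    using assms by (simp add: sum_subtractf)
qed

lemma sum_cd_run_coordinate:
  assumes "(\<Sum>k=1..n. x k) = 0" and "i \<in> {1..n}"
  shows "(\<Sum>js\<in>choice_seqs n t. cd_run \<epsilon> n \<Gamma> x js i) = (real n - (1 - \<epsilon>) / \<Gamma>) ^ t * x i"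
  using assms(2)
proof (induction t arbitrary: i)
  case 0
  have "choice_seqs n 0 = {[]}" by (auto simp: choice_seqs_def)
  then show ?case by (simp add: cd_run_def)
next
  case (Suc t)
  define C where "C = choice_seqs n t"
  define X where "X = cd_run \<epsilon> n \<Gamma> x"
  define c where "c = real n - (1 - \<epsilon>) / \<Gamma>"
  have IH: "\<And>k. k \<in> {1..n} \<Longrightarrow> (\<Sum>js\<in>C. X js k) = c ^ t * x k"
    using Suc.IH by (simp add: C_def X_def c_def)
  have "(\<Sum>js\<in>C. \<Sum>k=1..n. X js k) = (\<Sum>k=1..n. \<Sum>js\<in>C. X js k)"
    by (rule sum.swap)
  also have "\<dots> = c ^ t * (\<Sum>k=1..n. x k)"
    using IH by (simp add: sum_distrib_left)
  finally have coordinate_sum: "(\<Sum>js\<in>C. \<Sum>k=1..n. X js k) = 0"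
    using assms(1) by simp
  have "(\<Sum>js\<in>choice_seqs n (Suc t). X js i) = (\<Sum>js\<in>C. \<Sum>j=1..n. cd_step \<epsilon> n \<Gamma> (X js) j i)"
    by (simp add: sum_choice_seqs_Suc C_def X_def cd_run_def)
  also have "\<dots> = (\<Sum>js\<in>C. real n * X js i - ((1 - \<epsilon>) * X js i + \<epsilon> * (\<Sum>k=1..n. X js k)) / \<Gamma>)"
    by (intro sum.cong refl) (subst sum_cd_step_coordinate[OF Suc.prems], simp add: grad_eps_def)
  also have "\<dots> = real n * (\<Sum>js\<in>C. X js i)
      - ((1 - \<epsilon>) * (\<Sum>js\<in>C. X js i) + \<epsilon> * (\<Sum>js\<in>C. \<Sum>k=1..n. X js k)) / \<Gamma>"
    by (simp add: sum_subtractf sum_divide_distrib add_divide_distrib sum.distrib sum_distrib_left)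
  also have "\<dots> = c ^ Suc t * x i"
    using IH[OF Suc.prems] coordinate_sum by (simp add: c_def algebra_simps diff_divide_distrib)
  finally show ?case by (simp add: X_def c_def)
qed

lemma expectation_cd_run_coordinate:
  assumes "n > 0" and "(\<Sum>k=1..n. x k) = 0" and "i \<in> {1..n}"
  shows "measure_pmf.expectation (pmf_of_set (choice_seqs n t)) (\<lambda>js. cd_run \<epsilon> n \<Gamma> x js i)
    = (1 - (1 - \<epsilon>) / (real n * \<Gamma>)) ^ t * x i"
proof -
  have "choice_seqs n t \<noteq> {}"
    using card_choice_seqs[of n t] assms(1) by auto
  then have "measure_pmf.expectation (pmf_of_set (choice_seqs n t)) (\<lambda>js. cd_run \<epsilon> n \<Gamma> x js i)
      = ((real n - (1 - \<epsilon>) / \<Gamma>) / real n) ^ t * x i"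
    using assms(2,3)
    by (simp add: integral_pmf_of_set finite_choice_seqs card_choice_seqs sum_cd_run_coordinate power_divide)
  also have "\<dots> = (1 - (1 - \<epsilon>) / (real n * \<Gamma>)) ^ t * x i"
    using assms(1) by (simp add: diff_divide_distrib mult.commute)
  finally show ?thesis .
qed

lemma (in prob_space) square_expectation_le:
  fixes X :: "'a \<Rightarrow> real"
  assumes "integrable M X" and "integrable M (\<lambda>x. (X x)\<^sup>2)"
  shows "(expectation X)\<^sup>2 \<le> expectation (\<lambda>x. (X x)\<^sup>2)"
  using variance_eq[OF assms] variance_positive[of X] by simp

lemma f_eps_ge_sum_squares:
  assumes "0 \<le> \<epsilon>"
  shows "(1 - \<epsilon>) / 2 * (\<Sum>i=1..n. (x i)\<^sup>2) \<le> f_eps \<epsilon> n x"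
  using assms by (simp add: f_eps_def)

lemma expectation_f_eps_cd_run_ge:
  assumes "n > 0" and "0 \<le> \<epsilon>" and "\<epsilon> \<le> 1" and "(\<Sum>k=1..n. x k) = 0"
  shows "(1 - \<epsilon>) / 2 * ((1 - (1 - \<epsilon>) / (real n * \<Gamma>)) ^ t)\<^sup>2 * (\<Sum>i=1..n. (x i)\<^sup>2)
    \<le> measure_pmf.expectation (pmf_of_set (choice_seqs n t)) (\<lambda>js. f_eps \<epsilon> n (cd_run \<epsilon> n \<Gamma> x js))"
proof -
  define P where "P = pmf_of_set (choice_seqs n t)"
  define X where "X = cd_run \<epsilon> n \<Gamma> x"
  define \<mu> where "\<mu> = (1 - (1 - \<epsilon>) / (real n * \<Gamma>)) ^ t"
  have "choice_seqs n t \<noteq> {}"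
    using card_choice_seqs[of n t] assms(1) by auto
  then have integrable: "integrable P g" for g :: "nat list \<Rightarrow> real"
    by (simp add: P_def integrable_measure_pmf_finite finite_choice_seqs)
  have mean: "measure_pmf.expectation P (\<lambda>js. X js i) = \<mu> * x i" if "i \<in> {1..n}" for i
    using expectation_cd_run_coordinate[OF assms(1,4) that] by (simp add: P_def X_def \<mu>_def)
  have "(1 - \<epsilon>) / 2 * \<mu>\<^sup>2 * (\<Sum>i=1..n. (x i)\<^sup>2)
      = (1 - \<epsilon>) / 2 * (\<Sum>i=1..n. (measure_pmf.expectation P (\<lambda>js. X js i))\<^sup>2)"
    by (simp add: mean power_mult_distrib sum_distrib_left mult.assoc)
  also have "\<dots> \<le> (1 - \<epsilon>) / 2 * (\<Sum>i=1..n. measure_pmf.expectation P (\<lambda>js. (X js i)\<^sup>2))"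
    using assms(3) integrable
    by (intro mult_left_mono sum_mono measure_pmf.square_expectation_le) auto
  also have "\<dots> = measure_pmf.expectation P (\<lambda>js. (1 - \<epsilon>) / 2 * (\<Sum>i=1..n. (X js i)\<^sup>2))"
    using integrable by (simp add: integral_sum)
  also have "\<dots> \<le> measure_pmf.expectation P (\<lambda>js. f_eps \<epsilon> n (X js))"
    using integrable assms(2) by (intro integral_mono f_eps_ge_sum_squares)
  finally show ?thesis
    unfolding P_def X_def \<mu>_def .
qed

lemma sum_x_start:
  assumes "even n"
  shows "(\<Sum>i=1..n. x_start i) = 0"
proof -
  have "(\<Sum>i=1..2 * k. x_start i) = 0" for k
    by (induction k) (auto simp: x_start_def)
  then show ?thesis using assms by auto
qed

lemma x_start_squared [simp]: "(x_start i)\<^sup>2 = 1"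
  by (simp add: x_start_def)

lemma f_eps_x_start:
  assumes "even n"
  shows "f_eps \<epsilon> n x_start = (1 - \<epsilon>) / 2 * real n"
  using sum_x_start[OF assms] by (simp add: f_eps_def)

lemma f_eps_zero [simp]: "f_eps \<epsilon> n (\<lambda>_. 0) = 0"
  by (simp add: f_eps_def)

lemma one_minus_double_power_le:
  fixes a :: real
  assumes "0 \<le> a" and "a \<le> 1/2"
  shows "(1 - 2 * a) ^ t \<le> ((1 - a) ^ t)\<^sup>2"
proof -
  have "(1 - 2 * a) ^ t \<le> ((1 - a)\<^sup>2) ^ t"
    using assms by (intro power_mono) (auto simp: power2_eq_square algebra_simps)
  then show ?thesis by (simp flip: power_mult add: mult.commute)
qed

theorem theorem2:
  fixes n t :: nat and \<epsilon> \<Gamma> :: real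
  assumes "even n" and "n > 0"
    and "0 < \<epsilon>" and "\<epsilon> \<le> 1/18"
    and "\<Gamma> \<ge> 1"
  shows "measure_pmf.expectation (pmf_of_set (choice_seqs n t))
           (\<lambda>js. f_eps \<epsilon> n (cd_run \<epsilon> n \<Gamma> x_start js) - f_eps \<epsilon> n (\<lambda>_. 0))
         \<ge> (1 - 2 / real n * ((1 - \<epsilon>) / \<Gamma>)) ^ t * (f_eps \<epsilon> n x_start - f_eps \<epsilon> n (\<lambda>_. 0))"
proof -
  define a where "a = (1 - \<epsilon>) / (real n * \<Gamma>)"
  have "\<epsilon> \<le> 1" and "0 \<le> \<epsilon>"
    using assms(3,4) by simp_all
  have "2 \<le> real n"
    using assms(1,2) by (auto elim: evenE)
  then have "2 \<le> real n * \<Gamma>"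
    using mult_mono[of 2 "real n" 1 \<Gamma>] assms(5) by simp
  then have "0 \<le> a" and "a \<le> 1/2"
    using \<open>0 \<le> \<epsilon>\<close> \<open>\<epsilon> \<le> 1\<close> by (auto simp: a_def field_simps)
  have "(1 - 2 / real n * ((1 - \<epsilon>) / \<Gamma>)) ^ t * (f_eps \<epsilon> n x_start - f_eps \<epsilon> n (\<lambda>_. 0))
      = (1 - 2 * a) ^ t * ((1 - \<epsilon>) / 2 * real n)"
    using assms(1) by (simp add: a_def f_eps_x_start)
  also have "\<dots> \<le> ((1 - a) ^ t)\<^sup>2 * ((1 - \<epsilon>) / 2 * real n)"
    using one_minus_double_power_le[OF \<open>0 \<le> a\<close> \<open>a \<le> 1/2\<close>] \<open>\<epsilon> \<le> 1\<close>
    by (intro mult_right_mono) auto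
  also have "\<dots> = (1 - \<epsilon>) / 2 * ((1 - a) ^ t)\<^sup>2 * (\<Sum>i=1..n. (x_start i)\<^sup>2)"
    by simp
  also have "\<dots> \<le> measure_pmf.expectation (pmf_of_set (choice_seqs n t))
           (\<lambda>js. f_eps \<epsilon> n (cd_run \<epsilon> n \<Gamma> x_start js))"
    using expectation_f_eps_cd_run_ge[OF assms(2) \<open>0 \<le> \<epsilon>\<close> \<open>\<epsilon> \<le> 1\<close> sum_x_start[OF assms(1)]]
    unfolding a_def .
  finally show ?thesis
    by (simp only: f_eps_zero diff_zero)
qed

end
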